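(* Suppose that $S\cap(\alpha\times\{b\}\times\{b\})\neq\emptyset$ for all $b\in\alpha$. Let $(\mathcal A,xAByABz)$ be a nanoword over $\alpha$, where $A,B\in\mathcal A$ with $|B|=\tau(|A|)$ and $x,y,z$ are words in $\mathcal A\setminus\{A,B\}$. Then $(\mathcal A,xAByABz)\simeq_S(\mathcal A\setminus\{A,B\},xyz)$.
   Context: Fix a set $\alpha$ with an involution $\tau$ and a subset $S\subset\alpha\times\alpha\times\alpha$. An $\alpha$-alphabet is a set $\mathcal A$ with a map $A\mapsto|A|\in\alpha$. A nanoword over $\alpha$ is a pair $(\mathcal A,w)$ with $\mathcal A$ a finite $\alpha$-alphabet and $w$ a word in which each letter of $\mathcal A$ occurs exactly twice. Nanowords are isomorphic if a bijection of alphabets preserving $|\cdot|$ carries one word letterwise to the other. $S$-homotopy moves ($x,y,z,t$ words in the remaining letters; smaller alphabets carry the restricted projection): (1) $(\mathcal A,xAAy)\mapsto(\mathcal A\setminus\{A\},xy)$; (2) $(\mathcal A,xAByBAz)\mapsto(\mathcal A\setminus\{A,B\},xyz)$ if $|B|=\tau(|A|)$; (3) $(\mathcal A,xAByACzBCt)\mapsto(\mathcal A,xBAyCAzCBt)$ if $A,B,C$ are distinct and $(|A|,|B|,|C|)\in S$. $S$-homotopy $\simeq_S$ is the equivalence relation generated by isomorphisms, these moves and their inverses. *)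

theory Defs
  imports Main
begin

text \<open>A nanoword over alpha (type 'a) with letters of type 'l is represented as a triple
  (Alph, p, w): Alph is the alphabet, p is the projection (only its values on Alph matter),
  w is the word.\<close>

type_synonym ('l, 'a) nanoword = "'l set \<times> ('l \<Rightarrow> 'a) \<times> 'l list"

definition is_nanoword :: "('l, 'a) nanoword \<Rightarrow> bool" where
  "is_nanoword N = (case N of (Alph, p, w) \<Rightarrow>
     finite Alph \<and> set w \<subseteq> Alph \<and> (\<forall>a\<in>Alph. count_list w a = 2))"

definition nano_iso :: "('l, 'a) nanoword \<Rightarrow> ('l, 'a) nanoword \<Rightarrow> bool" where
  "nano_iso N M = (case N of (Alph, p, w) \<Rightarrow> case M of (Alph', p', w') \<Rightarrow>
     is_nanoword N \<and> is_nanoword M \<and>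
     (\<exists>f. bij_betw f Alph Alph' \<and> (\<forall>a\<in>Alph. p' (f a) = p a) \<and> w' = map f w))"

inductive nano_move :: "('a \<Rightarrow> 'a) \<Rightarrow> ('a \<times> 'a \<times> 'a) set
      \<Rightarrow> ('l, 'a) nanoword \<Rightarrow> ('l, 'a) nanoword \<Rightarrow> bool"
  for \<tau> :: "'a \<Rightarrow> 'a" and S :: "('a \<times> 'a \<times> 'a) set" where
  move1: "is_nanoword (Alph, p, x @ [A, A] @ y) \<Longrightarrow>
      nano_move \<tau> S (Alph, p, x @ [A, A] @ y) (Alph - {A}, p, x @ y)"
| move2: "is_nanoword (Alph, p, x @ [A, B] @ y @ [B, A] @ z) \<Longrightarrow> A \<noteq> B \<Longrightarrow>
      p B = \<tau> (p A) \<Longrightarrow>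
      nano_move \<tau> S (Alph, p, x @ [A, B] @ y @ [B, A] @ z) (Alph - {A, B}, p, x @ y @ z)"
| move3: "is_nanoword (Alph, p, x @ [A, B] @ y @ [A, C] @ z @ [B, C] @ t) \<Longrightarrow>
      distinct [A, B, C] \<Longrightarrow> (p A, p B, p C) \<in> S \<Longrightarrow>
      nano_move \<tau> S (Alph, p, x @ [A, B] @ y @ [A, C] @ z @ [B, C] @ t)
                     (Alph, p, x @ [B, A] @ y @ [C, A] @ z @ [C, B] @ t)"

definition S_homotopic :: "('a \<Rightarrow> 'a) \<Rightarrow> ('a \<times> 'a \<times> 'a) set
      \<Rightarrow> ('l, 'a) nanoword \<Rightarrow> ('l, 'a) nanoword \<Rightarrow> bool" where
  "S_homotopic \<tau> S = (symclp (\<lambda>N M. nano_iso N M \<or> nano_move \<tau> S N M))\<^sup>*\<^sup>*"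

end

theory Submission
  imports Defs "HOL-Library.Multiset"
begin

(*
  Add four fresh letters C, D, E, F with |D| = c for some (c, |B|, |B|) in S, |C| = \<tau>(c),
  |E| = |A| and |F| = |B|. Two inverse second moves turn xAByABz into xCEFDABDCyABFEz, and a
  third move on D, F, B turns that into xCEDFADBCyAFBEz. There A and F now cancel by a second
  move, after which DD, EB and CC cancel in turn, leaving xyz.
*)

lemma equivp_S_homotopic: "equivp (S_homotopic \<tau> S)"
  by (simp add: S_homotopic_def)

lemma S_homotopic_sym: "S_homotopic \<tau> S N M \<Longrightarrow> S_homotopic \<tau> S M N"
  using equivp_S_homotopic by (rule equivp_symp)

lemma S_homotopic_trans [trans]:
  "S_homotopic \<tau> S N M \<Longrightarrow> S_homotopic \<tau> S M K \<Longrightarrow> S_homotopic \<tau> S N K"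
  using equivp_S_homotopic by (rule equivp_transp)

lemma S_homotopic_if_nano_moves: "(nano_move \<tau> S)\<^sup>*\<^sup>* N M \<Longrightarrow> S_homotopic \<tau> S N M"
  unfolding S_homotopic_def
  by (induction rule: rtranclp_induct) (auto simp: symclp_def intro: rtranclp.rtrancl_into_rtrancl)

lemma is_nanoword_iff_mset:
  "is_nanoword (Alph, p, w) \<longleftrightarrow> finite Alph \<and> mset w = mset_set Alph + mset_set Alph"
proof (cases "finite Alph")
  case True
  have "count (mset_set Alph + mset_set Alph) a = (if a \<in> Alph then 2 else 0)" for a
    using True by (cases "a \<in> Alph") simp_all
  then have "mset w = mset_set Alph + mset_set Alph \<longleftrightarrow>
        (\<forall>a. count_list w a = (if a \<in> Alph then 2 else 0))"
    by (simp add: multiset_eq_iff count_mset)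
  also have "\<dots> \<longleftrightarrow> set w \<subseteq> Alph \<and> (\<forall>a\<in>Alph. count_list w a = 2)"
    by (auto simp: count_list_0_iff)
  finally show ?thesis
    using True by (simp add: is_nanoword_def)
qed (simp add: is_nanoword_def)

lemma is_nanoword_Un_iff:
  assumes "finite R" "R \<inter> Alph = {}" "mset w = mset u + mset_set R + mset_set R"
  shows "is_nanoword (Alph \<union> R, p, w) \<longleftrightarrow> is_nanoword (Alph, q, u)"
proof (cases "finite Alph")
  case True
  with assms have "mset_set (Alph \<union> R) = mset_set Alph + mset_set R"
    by (simp add: mset_set_Union Int_commute)
  with True assms show ?thesis
    by (simp add: is_nanoword_iff_mset add_ac)
qed (simp add: is_nanoword_def)

lemma is_nanoword_Diff:
  assumes nw: "is_nanoword (Alph, p, w)" and "finite R"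
    and w: "mset w = mset u + mset_set R + mset_set R"
  shows "is_nanoword (Alph - R, q, u)"
proof -
  have "R \<subseteq> set w"
    using \<open>finite R\<close> by (simp flip: set_mset_mset add: w)
  also have "set w \<subseteq> Alph"
    using nw by (simp add: is_nanoword_def)
  finally have "Alph - R \<union> R = Alph"
    by blast
  with nw assms show ?thesis
    using is_nanoword_Un_iff[of R "Alph - R" w u] by auto
qed

lemma nano_move1I:
  assumes "is_nanoword (Alph, p, w)" "w = x @ [A, A] @ y"
    and "Alph' = Alph - {A}" "w' = x @ y"
  shows "nano_move \<tau> S (Alph, p, w) (Alph', p, w')"
  using assms(1) unfolding assms(2-4) by (rule nano_move.move1)

lemma nano_move2I:
  assumes "is_nanoword (Alph, p, w)" "w = x @ [A, B] @ y @ [B, A] @ z" "A \<noteq> B" "p B = \<tau> (p A)"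
    and "Alph' = Alph - {A, B}" "w' = x @ y @ z"
  shows "nano_move \<tau> S (Alph, p, w) (Alph', p, w')"
  using assms(1,3,4) unfolding assms(2,5,6) by (rule nano_move.move2)

lemma nano_move3I:
  assumes "is_nanoword (Alph, p, w)" "w = x @ [A, B] @ y @ [A, C] @ z @ [B, C] @ t"
    and "distinct [A, B, C]" "(p A, p B, p C) \<in> S"
    and "w' = x @ [B, A] @ y @ [C, A] @ z @ [C, B] @ t"
  shows "nano_move \<tau> S (Alph, p, w) (Alph, p, w')"
  using assms(1,3,4) unfolding assms(2,5) by (rule nano_move.move3)

lemma is_nanoword_nano_move_target: "nano_move \<tau> S N M \<Longrightarrow> is_nanoword M"
proof (induction rule: nano_move.induct)
  case (move1 Alph p x A y)
  then show ?case
    by (intro is_nanoword_Diff[where R = "{A}"]) auto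
next
  case (move2 Alph p x A B y z)
  then show ?case
    by (intro is_nanoword_Diff[where R = "{A, B}"]) auto
next
  case (move3 Alph p x A B y C z t)
  then show ?case
    by (simp add: is_nanoword_iff_mset add_mset_commute)
qed

lemma S_homotopic_change_proj:
  assumes "is_nanoword (Alph, p, w)" "\<And>a. a \<in> Alph \<Longrightarrow> p a = q a"
  shows "S_homotopic \<tau> S (Alph, p, w) (Alph, q, w)"
proof -
  have "nano_iso (Alph, p, w) (Alph, q, w)"
    using assms by (auto simp: nano_iso_def is_nanoword_def intro!: exI[of _ id])
  then show ?thesis
    unfolding S_homotopic_def by (simp add: r_into_rtranclp)
qed

lemma ex_distinct_list_disjoint:
  assumes "infinite (UNIV :: 'a set)" "finite X"
  shows "\<exists>xs :: 'a list. length xs = n \<and> distinct xs \<and> set xs \<inter> X = {}"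
proof (induction n)
  case (Suc n)
  then obtain xs :: "'a list" where xs: "length xs = n" "distinct xs" "set xs \<inter> X = {}"
    by blast
  obtain a where "a \<notin> X \<union> set xs"
    using ex_new_if_finite[OF assms(1)] assms(2) by blast
  with xs show ?case
    by (intro exI[of _ "a # xs"]) auto
qed simp

context
  fixes \<tau> :: "'a \<Rightarrow> 'a" and S :: "('a \<times> 'a \<times> 'a) set"
    and Alph :: "'l set" and p :: "'l \<Rightarrow> 'a" and A B C D E F :: 'l and x y z :: "'l list"
  assumes involution: "\<And>a. \<tau> (\<tau> a) = a"
    and letters: "distinct [A, B, C, D, E, F]"
    and fresh: "{C, D, E, F} \<inter> Alph = {}"
    and tauAB: "p B = \<tau> (p A)"
    and proj: "(p D, p B, p B) \<in> S" "p C = \<tau> (p D)" "p E = p A" "p F = p B"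
begin

lemma is_nanoword_auxiliary_word:
  assumes "is_nanoword (Alph, p, x @ [A, B] @ y @ [A, B] @ z)"
  shows "is_nanoword (Alph \<union> {C, D, E, F}, p, x @ [C, E, D, F, A, D, B, C] @ y @ [A, F, B, E] @ z)"
  using is_nanoword_Un_iff[of "{C, D, E, F}" Alph "x @ [C, E, D, F, A, D, B, C] @ y @ [A, F, B, E] @ z"
      "x @ [A, B] @ y @ [A, B] @ z" p p] assms letters fresh
  by (simp add: add_mset_commute)

lemma auxiliary_word_moves_to_xAByABz:
  assumes nw: "is_nanoword (Alph \<union> {C, D, E, F}, p, x @ [C, E, D, F, A, D, B, C] @ y @ [A, F, B, E] @ z)"
  shows "(nano_move \<tau> S)\<^sup>*\<^sup>* (Alph \<union> {C, D, E, F}, p, x @ [C, E, D, F, A, D, B, C] @ y @ [A, F, B, E] @ z)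
    (Alph, p, x @ [A, B] @ y @ [A, B] @ z)"
proof -
  have m1: "nano_move \<tau> S (Alph \<union> {C, D, E, F}, p, x @ [C, E, D, F, A, D, B, C] @ y @ [A, F, B, E] @ z)
      (Alph \<union> {C, D, E, F}, p, x @ [C, E, F, D, A, B, D, C] @ y @ [A, B, F, E] @ z)"
    using nw letters proj
    by (intro nano_move3I[where x = "x @ [C, E]" and A = D and B = F and y = "[A]" and C = B
          and z = "[C] @ y @ [A]" and t = "[E] @ z"]) auto
  have m2: "nano_move \<tau> S (Alph \<union> {C, D, E, F}, p, x @ [C, E, F, D, A, B, D, C] @ y @ [A, B, F, E] @ z)
      (Alph \<union> {C, D}, p, x @ [C, D, A, B, D, C] @ y @ [A, B] @ z)"
    using is_nanoword_nano_move_target[OF m1] letters fresh tauAB proj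
    by (intro nano_move2I[where x = "x @ [C]" and A = E and B = F and y = "[D, A, B, D, C] @ y @ [A, B]"
          and z = z]) auto
  have m3: "nano_move \<tau> S (Alph \<union> {C, D}, p, x @ [C, D, A, B, D, C] @ y @ [A, B] @ z)
      (Alph, p, x @ [A, B] @ y @ [A, B] @ z)"
    using is_nanoword_nano_move_target[OF m2] letters fresh proj involution
    by (intro nano_move2I[where x = x and A = C and B = D and y = "[A, B]" and z = "y @ [A, B] @ z"]) auto
  from m1 m2 m3 show ?thesis
    by (blast intro: converse_rtranclp_into_rtranclp)
qed

lemma auxiliary_word_moves_to_xyz:
  assumes nw: "is_nanoword (Alph \<union> {C, D, E, F}, p, x @ [C, E, D, F, A, D, B, C] @ y @ [A, F, B, E] @ z)"
  shows "(nano_move \<tau> S)\<^sup>*\<^sup>* (Alph \<union> {C, D, E, F}, p, x @ [C, E, D, F, A, D, B, C] @ y @ [A, F, B, E] @ z)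
    (Alph - {A, B}, p, x @ y @ z)"
proof -
  have m1: "nano_move \<tau> S (Alph \<union> {C, D, E, F}, p, x @ [C, E, D, F, A, D, B, C] @ y @ [A, F, B, E] @ z)
      (Alph - {A} \<union> {C, D, E}, p, x @ [C, E, D, D, B, C] @ y @ [B, E] @ z)"
    using nw letters fresh tauAB proj involution
    by (intro nano_move2I[where x = "x @ [C, E, D]" and A = F and B = A and y = "[D, B, C] @ y"
          and z = "[B, E] @ z"]) auto
  have m2: "nano_move \<tau> S (Alph - {A} \<union> {C, D, E}, p, x @ [C, E, D, D, B, C] @ y @ [B, E] @ z)
      (Alph - {A} \<union> {C, E}, p, x @ [C, E, B, C] @ y @ [B, E] @ z)"
    using is_nanoword_nano_move_target[OF m1] letters fresh
    by (intro nano_move1I[where x = "x @ [C, E]" and A = D and y = "[B, C] @ y @ [B, E] @ z"]) auto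
  have m3: "nano_move \<tau> S (Alph - {A} \<union> {C, E}, p, x @ [C, E, B, C] @ y @ [B, E] @ z)
      (Alph - {A, B} \<union> {C}, p, x @ [C, C] @ y @ z)"
    using is_nanoword_nano_move_target[OF m2] letters fresh tauAB proj
    by (intro nano_move2I[where x = "x @ [C]" and A = E and B = B and y = "[C] @ y" and z = z]) auto
  have m4: "nano_move \<tau> S (Alph - {A, B} \<union> {C}, p, x @ [C, C] @ y @ z) (Alph - {A, B}, p, x @ y @ z)"
    using is_nanoword_nano_move_target[OF m3] letters fresh
    by (intro nano_move1I[where x = x and A = C and y = "y @ z"]) auto
  from m1 m2 m3 m4 show ?thesis
    by (blast intro: converse_rtranclp_into_rtranclp)
qed

lemma S_homotopic_cancel_AB_AB_with_fresh_letters: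
  assumes "is_nanoword (Alph, p, x @ [A, B] @ y @ [A, B] @ z)"
  shows "S_homotopic \<tau> S (Alph, p, x @ [A, B] @ y @ [A, B] @ z) (Alph - {A, B}, p, x @ y @ z)"
  using auxiliary_word_moves_to_xAByABz auxiliary_word_moves_to_xyz is_nanoword_auxiliary_word[OF assms]
  by (blast intro: S_homotopic_if_nano_moves S_homotopic_sym S_homotopic_trans)

end

theorem lemma3p2:
  fixes \<tau> :: "'a \<Rightarrow> 'a" and S :: "('a \<times> 'a \<times> 'a) set"
    and Alph :: "'l set" and p :: "'l \<Rightarrow> 'a" and A B :: 'l and x y z :: "'l list"
  assumes letters_infinite: "infinite (UNIV :: 'l set)"
    and involution: "\<And>a. \<tau> (\<tau> a) = a"
    and hS: "\<And>b. \<exists>a. (a, b, b) \<in> S"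
    and nw: "is_nanoword (Alph, p, x @ [A, B] @ y @ [A, B] @ z)"
    and AB: "A \<in> Alph" "B \<in> Alph" "A \<noteq> B"
    and tauAB: "p B = \<tau> (p A)"
    and xyz: "set x \<union> set y \<union> set z \<subseteq> Alph - {A, B}"
  shows "S_homotopic \<tau> S (Alph, p, x @ [A, B] @ y @ [A, B] @ z) (Alph - {A, B}, p, x @ y @ z)"
proof -
  obtain c where c: "(c, p B, p B) \<in> S"
    using hS by blast
  have "finite Alph"
    using nw by (simp add: is_nanoword_def)
  then obtain C D E F where fresh: "distinct [C, D, E, F]" "{C, D, E, F} \<inter> Alph = {}"
    using ex_distinct_list_disjoint[OF letters_infinite, of Alph 4]
    by (auto simp: length_Suc_conv numeral_eq_Suc)
  \<comment> \<open>Moves never change the projection, so the fresh letters get their values up front.\<close>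
  define q where "q = p(C := \<tau> c, D := c, E := p A, F := p B)"
  have p_eq_q: "p a = q a" if "a \<in> Alph" for a
    using that fresh by (auto simp: q_def)
  have q_values: "q A = p A" "q B = p B" "q C = \<tau> c" "q D = c" "q E = p A" "q F = p B"
    using AB fresh by (auto simp: q_def)
  have "S_homotopic \<tau> S (Alph, p, x @ [A, B] @ y @ [A, B] @ z) (Alph, q, x @ [A, B] @ y @ [A, B] @ z)"
    using nw p_eq_q by (rule S_homotopic_change_proj)
  also have "S_homotopic \<tau> S \<dots> (Alph - {A, B}, q, x @ y @ z)"
  proof (rule S_homotopic_cancel_AB_AB_with_fresh_letters[where C = C and D = D and E = E and F = F])
    show "distinct [A, B, C, D, E, F]"
      using AB fresh by auto
    show "is_nanoword (Alph, q, x @ [A, B] @ y @ [A, B] @ z)"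
      using nw by (simp add: is_nanoword_def)
  qed (use involution fresh tauAB c q_values in simp_all)
  also have "S_homotopic \<tau> S \<dots> (Alph - {A, B}, p, x @ y @ z)"
    using is_nanoword_Diff[OF nw, of "{A, B}" "x @ y @ z" q] AB p_eq_q
    by (intro S_homotopic_change_proj) auto
  finally show ?thesis .
qed

end
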